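(* For all integers $n\ge 1$ and $k\ge 3$, the book graph $B_{n,k}$ is odd prime.
   Context: All graphs are finite and simple. A graph $G$ of order $N$ is odd prime if there is a bijection $\ell:V(G)\to\{1,3,\ldots,2N-1\}$ with $\gcd(\ell(u),\ell(v))=1$ for every edge $uv$. The book graph $B_{n,k}$ consists of $n$ cycles of length $k$ (pages) all sharing one common edge $uv$ and otherwise disjoint: it has vertices $u,v$ and $w_{i,j}$ for $1\le i\le n$, $1\le j\le k-2$, with edges $uv$, $uw_{i,1}$, $w_{i,j}w_{i,j+1}$ ($1\le j\le k-3$) and $w_{i,k-2}v$ for each $i$. It has $(k-2)n+2$ vertices. *)

theory Defs
  imports Main
begin

definition odd_prime_graph :: "'a set \<Rightarrow> 'a set set \<Rightarrow> bool" where
  "odd_prime_graph V E \<longleftrightarrow>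
     (\<exists>l :: 'a \<Rightarrow> nat. bij_betw l V {m. odd m \<and> m \<le> 2 * card V - 1}
        \<and> (\<forall>u v. {u, v} \<in> E \<longrightarrow> coprime (l u) (l v)))"

datatype book_vertex = BU | BV | BW nat nat

definition book_vertices :: "nat \<Rightarrow> nat \<Rightarrow> book_vertex set" where
  "book_vertices n k = {BU, BV} \<union> {BW i j | i j. 1 \<le> i \<and> i \<le> n \<and> 1 \<le> j \<and> j \<le> k - 2}"

definition book_edges :: "nat \<Rightarrow> nat \<Rightarrow> book_vertex set set" where
  "book_edges n k =
     {{BU, BV}}
     \<union> {{BU, BW i 1} | i. 1 \<le> i \<and> i \<le> n}
     \<union> {{BW i j, BW i (j + 1)} | i j. 1 \<le> i \<and> i \<le> n \<and> 1 \<le> j \<and> j \<le> k - 3}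
     \<union> {{BW i (k - 2), BV} | i. 1 \<le> i \<and> i \<le> n}"

end

(* Label u with 1 and v with an odd prime p such that 2N - 1 < 3p, where N is the order of B_{n,k},
   and give w_{1,1}, ..., w_{1,k-2}, w_{2,1}, ..., w_{n,k-2}, in this order, the remaining odd numbers
   3, 5, ..., 2N - 1 (skipping p) in increasing order. Labels of consecutive vertices of a page are odd
   and differ by 2 or 4, hence coprime; u carries 1; and the neighbours w_{i,k-2} of v carry odd numbers
   below 3p other than p, none of which is a multiple of p.
   Such a p exists because some prime lies in (M, 3M] for every M >= 1. For M >= 947 this follows from
   Erdos' estimates for C = C(2m, m) with m = floor(3M/2): if there were no such prime, all prime factors
   of C would be at most M, each prime power in C is at most 2m and primes above sqrt(2m) divide C at
   most once, so C <= (2m)^sqrt(2m) 4^M, contradicting 4^m <= 2m C. Smaller M are handled by the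
   primes 2, 5, 13, 37, 109, 317, 947. *)

theory Submission
  imports Defs "HOL-Computational_Algebra.Primes" "HOL-Library.Discrete_Functions" "HOL.Binomial_Plus"
begin

section \<open>A prime between M and 3M\<close>

lemma prime_nat_by_trial_division:
  fixes p q :: nat
  assumes "1 < p" and "p < q\<^sup>2" and "\<forall>d\<in>set [2..<q]. \<not> d dvd p"
  shows "prime p"
  unfolding prime_nat_iff'
proof (intro conjI ballI notI)
  show "1 < p" by fact
  fix d assume d: "d \<in> {2..<p}" and "d dvd p"
  then obtain e where p_eq: "p = d * e" by blast
  have "e dvd p" "2 \<le> e" using p_eq d by (auto intro: Nat.gr0I simp: nat_mult_le_cancel1 numeral_2_eq_2)
  have "d < q \<or> e < q"
  proof (rule ccontr)
    assume "\<not> (d < q \<or> e < q)"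
    then have "q\<^sup>2 \<le> d * e" by (simp add: power2_eq_square mult_le_mono)
    then show False using p_eq assms(2) by simp
  qed
  then show False using assms(3) d \<open>d dvd p\<close> \<open>e dvd p\<close> \<open>2 \<le> e\<close> by auto
qed

lemma exists_prime_between_triple_small:
  fixes M :: nat
  assumes "1 \<le> M" and "M < 947"
  shows "\<exists>p. prime p \<and> M < p \<and> p \<le> 3 * M"
proof -
  have "prime (5::nat)"
    by (rule prime_nat_by_trial_division[where q = 3]) (simp_all add: upt_rec)
  moreover have "prime (13::nat)"
    by (rule prime_nat_by_trial_division[where q = 4]) (simp_all add: upt_rec)
  moreover have "prime (37::nat)"
    by (rule prime_nat_by_trial_division[where q = 7]) (simp_all add: upt_rec)
  moreover have "prime (109::nat)"
    by (rule prime_nat_by_trial_division[where q = 11]) (simp_all add: upt_rec)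
  moreover have "prime (317::nat)"
    by (rule prime_nat_by_trial_division[where q = 18]) (simp_all add: upt_rec)
  moreover have "prime (947::nat)"
    by (rule prime_nat_by_trial_division[where q = 31]) (simp_all add: upt_rec)
  ultimately have "prime (if M < 2 then 2 else if M < 5 then 5 else if M < 13 then 13
      else if M < 37 then 37 else if M < 109 then 109 else if M < 317 then 317 else 947 :: nat)"
    (is "prime ?p") using two_is_prime_nat by (simp only: split: if_split) blast
  moreover have "M < ?p \<and> ?p \<le> 3 * M"
    using assms by simp
  ultimately show ?thesis by blast
qed

lemma prod_primes_dvd_nat:
  fixes n :: nat
  assumes "n \<noteq> 0" and "\<And>p. p \<in> A \<Longrightarrow> prime p \<and> p dvd n"
  shows "\<Prod>A dvd n"
proof -
  have sub: "A \<subseteq> prime_factors n"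
    using assms by (auto simp: prime_factors_dvd)
  have "p dvd p ^ multiplicity p n" if "p \<in> A" for p
    using sub that by (auto simp: prime_factors_multiplicity intro: dvd_power)
  then have "\<Prod>A dvd (\<Prod>p\<in>prime_factors n. p ^ multiplicity p n)"
    by (intro prod_dvd_prod_subset2[OF finite_set_mset sub])
  also have "\<dots> = n"
    using prod_prime_factors[OF assms(1)] by simp
  finally show ?thesis .
qed

lemma binomial_odd_middle_le: "(2 * k + 1) choose k \<le> (4::nat) ^ k"
proof -
  have "(\<Sum>i\<in>{k, k + 1}. (2 * k + 1) choose i) \<le> (\<Sum>i\<le>2 * k + 1. (2 * k + 1) choose i)"
    by (rule sum_mono2) auto
  also have "\<dots> = 2 ^ (2 * k + 1)"
    by (rule choose_row_sum)
  finally have "2 * ((2 * k + 1) choose k) \<le> 2 * 4 ^ k"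
    using binomial_symmetric[of k "2 * k + 1"] by (simp add: power_mult)
  then show ?thesis by simp
qed

lemma primorial_le_power4: "\<Prod>{p::nat. prime p \<and> p \<le> n} \<le> 4 ^ n"
proof (induction n rule: less_induct)
  case (less n)
  consider "n \<le> 2" | "2 < n" "even n" | "2 < n" "odd n"
    by linarith
  then show ?case
  proof cases
    case 1
    then have "{p::nat. prime p \<and> p \<le> n} = (if n = 2 then {2} else {})"
      by (auto dest: prime_ge_2_nat)
    then show ?thesis by simp
  next
    case 2
    then have "\<not> prime n"
      using prime_odd_nat[of n] by blast
    then have "{p::nat. prime p \<and> p \<le> n} = {p. prime p \<and> p \<le> n - 1}"
      using 2 by (auto simp: le_diff_conv2 Suc_le_eq order.order_iff_strict)
    then have "\<Prod>{p::nat. prime p \<and> p \<le> n} \<le> 4 ^ (n - 1)"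
      using less[of "n - 1"] 2 by simp
    also have "\<dots> \<le> 4 ^ n"
      by (simp add: power_increasing)
    finally show ?thesis .
  next
    case 3
    then obtain k where k: "n = 2 * k + 1"
      by (auto elim: oddE)
    with 3 have "1 \<le> k"
      by simp
    define A where "A = {p::nat. prime p \<and> p \<le> k + 1}"
    define B where "B = {p::nat. prime p \<and> k + 1 < p \<and> p \<le> n}"
    have "\<Prod>A \<le> 4 ^ (k + 1)"
      unfolding A_def using less[of "k + 1"] k \<open>1 \<le> k\<close> by simp
    have "\<Prod>B dvd (2 * k + 1) choose k"
    proof (rule prod_primes_dvd_nat)
      fix p assume "p \<in> B"
      then have p: "prime p" "k + 1 < p" "p \<le> 2 * k + 1"
        using k by (auto simp: B_def)
      have "fact k * fact (k + 1) * ((2 * k + 1) choose k) = (fact (2 * k + 1) :: nat)"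
        using binomial_fact_lemma[of k "2 * k + 1"] by (simp add: mult_ac)
      moreover have "p dvd (fact (2 * k + 1) :: nat)" "\<not> p dvd (fact k :: nat)"
        "\<not> p dvd (fact (k + 1) :: nat)"
        using p by (simp_all only: prime_dvd_fact_iff)
      ultimately show "prime p \<and> p dvd (2 * k + 1) choose k"
        using p(1) by (metis prime_dvd_mult_iff)
    qed simp
    then have "\<Prod>B \<le> (2 * k + 1) choose k"
      by (rule dvd_imp_le) simp
    also have "\<dots> \<le> 4 ^ k"
      by (rule binomial_odd_middle_le)
    finally have "\<Prod>B \<le> 4 ^ k" .
    have "{p::nat. prime p \<and> p \<le> n} = A \<union> B" "A \<inter> B = {}"
      unfolding A_def B_def using k by auto
    then have "\<Prod>{p::nat. prime p \<and> p \<le> n} = \<Prod>A * \<Prod>B"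
      by (simp add: A_def B_def prod.union_disjoint)
    also have "\<dots> \<le> 4 ^ (k + 1) * 4 ^ k"
      using \<open>\<Prod>A \<le> 4 ^ (k + 1)\<close> \<open>\<Prod>B \<le> 4 ^ k\<close> by (rule mult_le_mono)
    also have "\<dots> = 4 ^ n"
      using k by (simp flip: power_add)
    finally show ?thesis .
  qed
qed

lemma less_power_of_prime: "prime (p::nat) \<Longrightarrow> n < p ^ n"
  using less_exp[of n] power_mono[of 2 p n] prime_ge_2_nat[of p] by linarith

lemma multiplicity_fact_nat:
  fixes p n N :: nat
  assumes p: "prime p" and "n \<le> N"
  shows "multiplicity p (fact n) = (\<Sum>i\<in>{1..N}. n div p ^ i)"
  using \<open>n \<le> N\<close>
proof (induction n)
  case 0
  then show ?case by simp
next
  case (Suc n)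
  let ?v = "multiplicity p (Suc n)"
  have "p ^ ?v \<le> Suc n"
    by (rule dvd_imp_le[OF multiplicity_dvd]) simp
  then have "?v \<le> N"
    using less_power_of_prime[OF p, of ?v] Suc.prems by linarith
  have power_dvd_iff: "p ^ i dvd Suc n \<longleftrightarrow> i \<le> ?v" for i
    using p by (intro power_dvd_iff_le_multiplicity) auto
  have "Suc n div p ^ i = n div p ^ i + of_bool (i \<le> ?v)" for i
    using power_dvd_iff[of i] by (simp add: div_Suc dvd_eq_mod_eq_0)
  then have "(\<Sum>i\<in>{1..N}. Suc n div p ^ i) = (\<Sum>i\<in>{1..N}. n div p ^ i) + card ({1..N} \<inter> {i. i \<le> ?v})"
    by (simp add: sum.distrib)
  also have "{1..N} \<inter> {i. i \<le> ?v} = {1..?v}"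
    using \<open>?v \<le> N\<close> by auto
  finally have sum_Suc: "(\<Sum>i\<in>{1..N}. Suc n div p ^ i) = (\<Sum>i\<in>{1..N}. n div p ^ i) + ?v"
    by simp
  have "multiplicity p (Suc n * fact n :: nat) = ?v + multiplicity p (fact n :: nat)"
    using p by (intro prime_elem_multiplicity_mult_distrib) auto
  then show ?case
    using Suc sum_Suc by (simp only: fact_Suc of_nat_id)
qed

lemma div_double_le: "(2 * m) div q \<le> 2 * (m div q) + (1::nat)"
proof (cases "q = 0")
  case False
  have "m = q * (m div q) + m mod q" "m mod q < q" "q * (2 * (m div q) + 2) = 2 * (q * (m div q)) + 2 * q"
    using False by (simp_all add: algebra_simps)
  then have "2 * m < q * (2 * (m div q) + 2)"
    by linarith
  then have "(2 * m) div q < 2 * (m div q) + 2"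
    using False by (simp add: div_less_iff_less_mult mult.commute)
  then show ?thesis
    by simp
qed simp

lemma prime_power_multiplicity_central_binomial_le:
  fixes p m :: nat
  assumes p: "prime p" and "1 \<le> m"
  shows "p ^ multiplicity p ((2 * m) choose m) \<le> 2 * m"
proof (rule ccontr)
  define v where "v = multiplicity p ((2 * m) choose m)"
  assume "\<not> p ^ multiplicity p ((2 * m) choose m) \<le> 2 * m"
  then have big: "2 * m < p ^ v"
    by (simp add: v_def)
  then have "1 \<le> v"
    using \<open>1 \<le> m\<close> by (cases v) auto
  have "fact (2 * m) = fact m * fact m * ((2 * m) choose m :: nat)"
    using binomial_fact_lemma[of m "2 * m"] by (simp add: mult_ac)
  then have "multiplicity p (fact (2 * m) :: nat) = 2 * multiplicity p (fact m :: nat) + v"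
    using p by (simp add: v_def prime_elem_multiplicity_mult_distrib)
  then have legendre: "(\<Sum>i\<in>{1..2 * m}. 2 * m div p ^ i) = 2 * (\<Sum>i\<in>{1..2 * m}. m div p ^ i) + v"
    using multiplicity_fact_nat[OF p, of "2 * m" "2 * m"] multiplicity_fact_nat[OF p, of m "2 * m"]
    by simp
  have term_le: "2 * m div p ^ i \<le> 2 * (m div p ^ i) + of_bool (i < v)" for i
  proof (cases "i < v")
    case False
    then have "p ^ v \<le> p ^ i"
      using p by (intro power_increasing) (auto simp: prime_gt_0_nat Suc_le_eq)
    then show ?thesis
      using big by simp
  qed (use div_double_le[of m "p ^ i"] in simp)
  have "(\<Sum>i\<in>{1..2 * m}. 2 * m div p ^ i) \<le> (\<Sum>i\<in>{1..2 * m}. 2 * (m div p ^ i) + of_bool (i < v))"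
    by (intro sum_mono term_le)
  also have "\<dots> = 2 * (\<Sum>i\<in>{1..2 * m}. m div p ^ i) + card ({1..2 * m} \<inter> {i. i < v})"
    by (simp add: sum.distrib sum_distrib_left)
  also have "card ({1..2 * m} \<inter> {i. i < v}) \<le> card {1..<v}"
    by (intro card_mono) auto
  finally show False
    using legendre \<open>1 \<le> v\<close> by simp
qed

lemma multiplicity_central_binomial_le_one:
  fixes p m :: nat
  assumes p: "prime p" and "2 * m < p\<^sup>2"
  shows "multiplicity p ((2 * m) choose m) \<le> 1"
proof (cases "m = 0")
  case False
  then have "p ^ multiplicity p ((2 * m) choose m) < p ^ 2"
    using prime_power_multiplicity_central_binomial_le[OF p, of m] assms(2) by simp
  then have "multiplicity p ((2 * m) choose m) < 2"
    using prime_gt_1_nat[OF p] by (rule power_less_imp_less_exp[rotated])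
  then show ?thesis
    by simp
qed simp

lemma central_binomial_le_if_prime_factors_le:
  fixes m M :: nat
  assumes "1 \<le> m" and factors_le: "\<And>p. p \<in> prime_factors ((2 * m) choose m) \<Longrightarrow> p \<le> M"
  shows "(2 * m) choose m \<le> (2 * m) ^ floor_sqrt (2 * m) * 4 ^ M"
proof -
  define C where "C = (2 * m) choose m"
  define s where "s = floor_sqrt (2 * m)"
  define A where "A = {p \<in> prime_factors C. p \<le> s}"
  define B where "B = {p \<in> prime_factors C. s < p}"
  have prime: "prime p" if "p \<in> prime_factors C" for p
    using that by (rule in_prime_factors_imp_prime)
  have partition: "prime_factors C = A \<union> B" "A \<inter> B = {}" "finite A" "finite B"
    by (auto simp: A_def B_def)
  then have "C = (\<Prod>p\<in>A \<union> B. p ^ multiplicity p C)"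
    using prod_prime_factors[of C] by (simp add: C_def)
  then have "C = (\<Prod>p\<in>A. p ^ multiplicity p C) * (\<Prod>p\<in>B. p ^ multiplicity p C)"
    using partition by (simp add: prod.union_disjoint)
  moreover have "(\<Prod>p\<in>A. p ^ multiplicity p C) \<le> (2 * m) ^ s"
  proof -
    have "card A \<le> card {1..s}"
      using prime by (intro card_mono) (auto simp: A_def prime_gt_0_nat Suc_le_eq)
    have "(\<Prod>p\<in>A. p ^ multiplicity p C) \<le> (\<Prod>p\<in>A. 2 * m)"
      using prime_power_multiplicity_central_binomial_le \<open>1 \<le> m\<close> prime
      by (intro prod_mono) (auto simp: A_def C_def)
    also have "\<dots> = (2 * m) ^ card A"
      by simp
    also have "\<dots> \<le> (2 * m) ^ s"
      using \<open>card A \<le> card {1..s}\<close> \<open>1 \<le> m\<close> by (intro power_increasing) simp_all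
    finally show ?thesis .
  qed
  moreover have "(\<Prod>p\<in>B. p ^ multiplicity p C) = \<Prod>B"
  proof (rule prod.cong[OF refl])
    fix p assume "p \<in> B"
    then have "prime p" "p \<in> prime_factors C" "s < p"
      using prime by (auto simp: B_def)
    have "2 * m < (Suc s)\<^sup>2"
      unfolding s_def by (rule Suc_floor_sqrt_power2_gt)
    also have "\<dots> \<le> p\<^sup>2"
      using \<open>s < p\<close> by (intro power_mono) simp_all
    finally have "multiplicity p C \<le> 1"
      unfolding C_def by (rule multiplicity_central_binomial_le_one[OF \<open>prime p\<close>])
    moreover have "0 < multiplicity p C"
      using \<open>p \<in> prime_factors C\<close> by (simp add: prime_factors_multiplicity)
    ultimately have "multiplicity p C = 1"
      by simp
    then show "p ^ multiplicity p C = p"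
      by simp
  qed
  moreover have "\<Prod>B \<le> 4 ^ M"
  proof -
    have "B \<subseteq> {p. prime p \<and> p \<le> M}"
      using prime factors_le by (auto simp: B_def C_def)
    then have "\<Prod>B dvd \<Prod>{p::nat. prime p \<and> p \<le> M}"
      by (intro prod_dvd_prod_subset) simp_all
    then have "\<Prod>B \<le> \<Prod>{p::nat. prime p \<and> p \<le> M}"
      by (rule dvd_imp_le) (auto simp: prime_gt_0_nat)
    also have "\<dots> \<le> 4 ^ M"
      by (rule primorial_le_power4)
    finally show ?thesis .
  qed
  ultimately show ?thesis
    unfolding C_def s_def by (metis mult_le_mono)
qed

lemma Suc_power6_le_power2: "40 \<le> s \<Longrightarrow> (s + 1) ^ 6 \<le> (2::nat) ^ (s - 7)"
proof (induction s rule: nat_induct_at_least)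
  case (Suc s)
  have "40 ^ 6 * (s + 2) ^ 6 = (40 * (s + 2)) ^ 6"
    by (simp only: power_mult_distrib)
  also have "\<dots> \<le> (41 * (s + 1)) ^ 6"
    using Suc.hyps by (intro power_mono) simp_all
  also have "\<dots> = 41 ^ 6 * (s + 1) ^ 6"
    by (simp only: power_mult_distrib)
  also have "\<dots> \<le> 40 ^ 6 * (2 * (s + 1) ^ 6)"
    by simp
  finally have "(s + 2) ^ 6 \<le> 2 * (s + 1) ^ 6"
    by (subst (asm) mult_le_cancel1) simp
  also have "\<dots> \<le> 2 * 2 ^ (s - 7)"
    using Suc.IH by simp
  also have "\<dots> = 2 ^ (Suc s - 7)"
    using Suc.hyps by (simp add: Suc_diff_le flip: power_Suc)
  finally show ?case
    by simp
qed simp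

lemma Suc_power_lt_power2_square: "40 \<le> s \<Longrightarrow> (s + 1) ^ (6 * (s + 1)) < (2::nat) ^ (s\<^sup>2 - 3)"
proof -
  assume "40 \<le> s"
  have "(s + 1) ^ (6 * (s + 1)) = ((s + 1) ^ 6) ^ (s + 1)"
    by (rule power_mult)
  also have "\<dots> \<le> (2 ^ (s - 7)) ^ (s + 1)"
    using Suc_power6_le_power2[OF \<open>40 \<le> s\<close>] by (rule power_mono) simp
  also have "\<dots> = 2 ^ ((s - 7) * (s + 1))"
    by (rule power_mult[symmetric])
  also have "\<dots> < 2 ^ (s\<^sup>2 - 3)"
  proof (rule power_strict_increasing)
    define t where "t = s - 7"
    have "s = t + 7"
      using \<open>40 \<le> s\<close> by (simp add: t_def)
    then show "(s - 7) * (s + 1) < s\<^sup>2 - 3"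
      by (simp add: power2_eq_square algebra_simps)
  qed simp
  finally show ?thesis .
qed

lemma exists_prime_between_triple_large:
  fixes M :: nat
  assumes "947 \<le> M"
  shows "\<exists>p. prime p \<and> M < p \<and> p \<le> 3 * M"
proof (rule ccontr)
  assume no_prime: "\<not> ?thesis"
  define m where "m = 3 * M div 2"
  define C where "C = (2 * m) choose m"
  define s where "s = floor_sqrt (2 * m)"
  have m: "1 \<le> m" "2 * m \<le> 3 * M" "3 * M \<le> 2 * m + 1"
    using assms by (auto simp: m_def)
  have fact_eq: "fact (2 * m) = fact m * fact m * (C :: nat)"
    using binomial_fact_lemma[of m "2 * m"] by (simp add: C_def mult_ac)
  have "p \<le> M" if "p \<in> prime_factors C" for p
  proof -
    have "prime p" "p dvd fact (2 * m)"
      using that fact_eq by (auto intro: dvd_mult_left)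
    then have "p \<le> 3 * M"
      using m(2) by (simp add: prime_dvd_fact_iff)
    then show ?thesis
      using no_prime \<open>prime p\<close> by (meson not_le)
  qed
  then have C_le: "C \<le> (2 * m) ^ s * 4 ^ M"
    using central_binomial_le_if_prime_factors_le[OF m(1)] by (simp add: C_def s_def)
  have "real (4 ^ m) \<le> real (2 * m * C)"
    using central_binomial_lower_bound[of m] m(1) by (simp add: C_def field_simps)
  then have central_lower: "4 ^ m \<le> 2 * m * C"
    by (simp only: of_nat_le_iff)
  have "3 * M - 1 = (M - 1) + 2 * M"
    using assms by simp
  then have "(2::nat) ^ (M - 1) * 4 ^ M = 2 ^ (3 * M - 1)"
    by (simp add: power_add power_mult)
  also have "\<dots> \<le> 2 ^ (2 * m)"
    using m(3) by (intro power_increasing) simp_all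
  also have "\<dots> = 4 ^ m"
    by (simp add: power_mult)
  also have "\<dots> \<le> 2 * m * C"
    by (rule central_lower)
  also have "\<dots> \<le> 2 * m * ((2 * m) ^ s * 4 ^ M)"
    using C_le by simp
  also have "\<dots> = (2 * m) ^ (s + 1) * 4 ^ M"
    by simp
  finally have "2 ^ (M - 1) * 4 ^ M \<le> (2 * m) ^ (s + 1) * (4::nat) ^ M" .
  then have "2 ^ (M - 1) \<le> (2 * m) ^ (s + 1)"
    by simp
  also have "\<dots> \<le> ((s + 1)\<^sup>2) ^ (s + 1)"
    using Suc_floor_sqrt_power2_gt[of "2 * m"] by (intro power_mono) (simp_all add: s_def)
  finally have "(2::nat) ^ (M - 1) \<le> (s + 1) ^ (2 * (s + 1))"
    by (simp only: power_mult)
  note power_bound = this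
  have "40 \<le> s"
    using m assms by (simp add: s_def le_floor_sqrtI)
  have "(2::nat) ^ (3 * (M - 1)) = (2 ^ (M - 1)) ^ 3"
    by (metis power_mult mult.commute)
  also have "\<dots> \<le> ((s + 1) ^ (2 * (s + 1))) ^ 3"
    using power_bound by (rule power_mono) simp
  also have "\<dots> = (s + 1) ^ (6 * (s + 1))"
    by (simp only: power_mult[symmetric] mult.commute[of 3] mult.assoc) simp
  also have "\<dots> < 2 ^ (s\<^sup>2 - 3)"
    using \<open>40 \<le> s\<close> by (rule Suc_power_lt_power2_square)
  also have "\<dots> \<le> 2 ^ (3 * (M - 1))"
    using floor_sqrt_power2_le[of "2 * m", folded s_def] m(2) by (intro power_increasing) arith+
  finally show False
    by simp
qed

lemma exists_prime_between_triple:
  fixes M :: nat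
  assumes "1 \<le> M"
  shows "\<exists>p. prime p \<and> M < p \<and> p \<le> 3 * M"
  using assms exists_prime_between_triple_small exists_prime_between_triple_large
  by (cases "M < 947") simp_all

lemma exists_odd_prime_le_less_triple:
  fixes x :: nat
  assumes "odd x" and "3 \<le> x"
  shows "\<exists>p. prime p \<and> odd p \<and> p \<le> x \<and> x < 3 * p"
proof -
  have "1 \<le> x div 3"
    using assms(2) by simp
  then obtain p where p: "prime p" "x div 3 < p" "p \<le> 3 * (x div 3)"
    using exists_prime_between_triple by blast
  show ?thesis
  proof (cases "p = 2")
    case True
    then have "x = 3 \<or> x = 5"
      using p assms by presburger
    moreover have "prime (3::nat)"
      by (rule prime_nat_by_trial_division[where q = 2]) simp_all
    ultimately show ?thesis
      by (intro exI[of _ 3]) auto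
  next
    case False
    then show ?thesis
      using p prime_odd_nat[of p] prime_ge_2_nat[of p] by auto
  qed
qed

section \<open>An odd prime labelling of the book graph\<close>

definition odd_skipping :: "nat \<Rightarrow> nat \<Rightarrow> nat" where
  "odd_skipping p t = (if 2 * t + 1 < p then 2 * t + 1 else 2 * t + 3)"

lemma odd_odd_skipping: "odd (odd_skipping p t)"
  by (simp add: odd_skipping_def)

lemma odd_skipping_neq: "odd_skipping p t \<noteq> p"
  by (simp add: odd_skipping_def)

lemma odd_skipping_bounds: "2 * t + 1 \<le> odd_skipping p t" "odd_skipping p t \<le> 2 * t + 3"
  by (simp_all add: odd_skipping_def)

lemma strict_mono_odd_skipping: "strict_mono (odd_skipping p)"
  by (rule strict_mono_Suc_iff[THEN iffD2]) (simp add: odd_skipping_def)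

lemma odd_skipping_Suc: "odd_skipping p (Suc t) \<in> {odd_skipping p t + 2, odd_skipping p t + 4}"
  by (simp add: odd_skipping_def)

lemma coprime_odd_add_power2:
  fixes a :: nat
  assumes "odd a"
  shows "coprime a (a + 2 ^ e)"
proof -
  have "coprime a (2 ^ e)"
    using assms by simp
  then show ?thesis
    by (simp add: coprime_iff_gcd_eq_1)
qed

lemma coprime_odd_skipping_Suc: "coprime (odd_skipping p t) (odd_skipping p (Suc t))"
  using odd_skipping_Suc[of p t] coprime_odd_add_power2[OF odd_odd_skipping, of p t 1]
    coprime_odd_add_power2[OF odd_odd_skipping, of p t 2]
  by auto

lemma coprime_prime_odd_less_triple:
  fixes p q :: nat
  assumes "prime p" and "odd q" and "q < 3 * p" and "q \<noteq> p"
  shows "coprime p q"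
proof (rule prime_imp_coprime[OF assms(1)], rule notI)
  assume "p dvd q"
  then obtain c where "q = p * c"
    by blast
  with assms(2-4) have "odd c" "c < 3" "c \<noteq> 1"
    by auto
  then show False
    by presburger
qed

fun book_label :: "nat \<Rightarrow> nat \<Rightarrow> book_vertex \<Rightarrow> nat" where
  "book_label p k BU = 1"
| "book_label p k BV = p"
| "book_label p k (BW i j) = odd_skipping p ((i - 1) * (k - 2) + j)"

lemma card_book_vertices: "card (book_vertices n k) = n * (k - 2) + 2"
proof -
  let ?pages = "(\<lambda>(i, j). BW i j) ` ({1..n} \<times> {1..k - 2})"
  have "book_vertices n k = {BU, BV} \<union> ?pages" "{BU, BV} \<inter> ?pages = {}"
    unfolding book_vertices_def by auto
  moreover have "inj_on (\<lambda>(i, j). BW i j) ({1..n} \<times> {1..k - 2})"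
    by (auto simp: inj_on_def)
  then have "card ?pages = n * (k - 2)"
    by (simp add: card_image card_cartesian_product)
  ultimately show ?thesis
    by (simp add: card_Un_disjoint)
qed

lemma mult_add_less_inj:
  fixes a b a' b' m :: nat
  assumes "b < m" and "b' < m" and "a * m + b = a' * m + b'"
  shows "a = a' \<and> b = b'"
proof -
  have "a = (a * m + b) div m" "b = (a * m + b) mod m"
    "a' = (a' * m + b') div m" "b' = (a' * m + b') mod m"
    using assms(1,2) by simp_all
  then show ?thesis
    using assms(3) by metis
qed

lemma page_index_inj:
  fixes i j i' j' m :: nat
  assumes "1 \<le> i" "1 \<le> i'" "1 \<le> j" "j \<le> m" "1 \<le> j'" "j' \<le> m"
    and "(i - 1) * m + j = (i' - 1) * m + j'"
  shows "i = i' \<and> j = j'"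
proof -
  have "(i - 1) * m + (j - 1) = (i' - 1) * m + (j' - 1)"
    using assms by simp
  then have "i - 1 = i' - 1 \<and> j - 1 = j' - 1"
    using assms(3-6) by (intro mult_add_less_inj) simp_all
  then show ?thesis
    using assms(1-5) by linarith
qed

lemma page_index_le:
  fixes i j n m :: nat
  assumes "1 \<le> i" "i \<le> n" "j \<le> m"
  shows "(i - 1) * m + j \<le> n * m"
proof -
  have "(i - 1) * m + j \<le> (i - 1) * m + m"
    using assms(3) by simp
  also have "\<dots> = i * m"
    using assms(1) by (cases i) simp_all
  also have "\<dots> \<le> n * m"
    using assms(2) by simp
  finally show ?thesis .
qed

lemma inj_on_book_label:
  assumes "p \<noteq> 1"
  shows "inj_on (book_label p k) (book_vertices n k)"
proof -
  have page_label: "1 < book_label p k (BW i j) \<and> book_label p k (BW i j) \<noteq> p"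
    if "BW i j \<in> book_vertices n k" for i j
    using that odd_skipping_bounds(1)[of "(i - 1) * (k - 2) + j" p]
    by (auto simp: book_vertices_def odd_skipping_neq)
  have page_inj: "i = i' \<and> j = j'"
    if "BW i j \<in> book_vertices n k" "BW i' j' \<in> book_vertices n k"
      and "book_label p k (BW i j) = book_label p k (BW i' j')" for i j i' j'
  proof -
    have "(i - 1) * (k - 2) + j = (i' - 1) * (k - 2) + j'"
      using that(3) strict_mono_eq[OF strict_mono_odd_skipping] by simp
    then show ?thesis
      using that(1,2) page_index_inj[of i i' j "k - 2" j'] by (auto simp: book_vertices_def)
  qed
  show ?thesis
  proof (rule inj_onI)
    fix a b
    assume "a \<in> book_vertices n k" "b \<in> book_vertices n k" "book_label p k a = book_label p k b"
    then show "a = b"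
      using assms by (cases a; cases b) (auto dest: page_label page_inj)
  qed
qed

lemma book_label_odd_le:
  assumes "odd p" and "p \<le> 2 * card (book_vertices n k) - 1" and "v \<in> book_vertices n k"
  shows "odd (book_label p k v) \<and> book_label p k v \<le> 2 * card (book_vertices n k) - 1"
proof (cases v)
  case (BW i j)
  then have "(i - 1) * (k - 2) + j \<le> n * (k - 2)"
    using assms(3) page_index_le[of i n j "k - 2"] by (simp add: book_vertices_def)
  then show ?thesis
    using BW odd_skipping_bounds(2)[of p "(i - 1) * (k - 2) + j"]
    by (simp add: card_book_vertices odd_odd_skipping)
qed (use assms in \<open>simp_all add: card_book_vertices\<close>)

lemma card_odd_le_double_minus_one: "card {q::nat. odd q \<and> q \<le> 2 * N - 1} = N"
proof -
  have "{q::nat. odd q \<and> q \<le> 2 * N - 1} = (\<lambda>t. 2 * t + 1) ` {..<N}"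
    by (auto elim!: oddE simp: image_iff)
  moreover have "inj_on (\<lambda>t::nat. 2 * t + 1) {..<N}"
    by (auto simp: inj_on_def)
  ultimately show ?thesis
    by (simp add: card_image)
qed

lemma bij_betw_book_label:
  fixes p n k :: nat
  defines "L \<equiv> {q. odd q \<and> q \<le> 2 * card (book_vertices n k) - 1}"
  assumes "odd p" and "p \<noteq> 1" and "p \<le> 2 * card (book_vertices n k) - 1"
  shows "bij_betw (book_label p k) (book_vertices n k) L"
proof -
  have "book_label p k ` book_vertices n k \<subseteq> L"
    using book_label_odd_le[OF assms(2,4)] by (auto simp: L_def)
  moreover have "card (book_label p k ` book_vertices n k) = card L"
    using card_image[OF inj_on_book_label[OF assms(3)]] card_odd_le_double_minus_one
    by (simp add: L_def)
  ultimately have "book_label p k ` book_vertices n k = L"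
    by (intro card_subset_eq) (simp_all add: L_def)
  then show ?thesis
    using inj_on_book_label[OF assms(3)] by (simp add: bij_betw_def)
qed

lemma coprime_book_label_edge:
  assumes "prime p" and "2 * card (book_vertices n k) - 1 < 3 * p" and "{a, b} \<in> book_edges n k"
  shows "coprime (book_label p k a) (book_label p k b)"
proof -
  have by_edge: "coprime (book_label p k a) (book_label p k b)"
    if "{a, b} = {x, y}" "coprime (book_label p k x) (book_label p k y)" for x y
    using that by (auto simp: doubleton_eq_iff coprime_commute)
  from assms(3) consider
      "{a, b} = {BU, BV}"
    | i where "{a, b} = {BU, BW i 1}"
    | i j where "{a, b} = {BW i j, BW i (j + 1)}"
    | i where "{a, b} = {BW i (k - 2), BV}" "1 \<le> i" "i \<le> n"
    unfolding book_edges_def by blast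
  then show ?thesis
  proof cases
    case 1
    then show ?thesis
      by (intro by_edge[of BU BV]) simp_all
  next
    case (2 i)
    then show ?thesis
      by (intro by_edge[of BU "BW i 1"]) simp_all
  next
    case (3 i j)
    then show ?thesis
      using coprime_odd_skipping_Suc[of p "(i - 1) * (k - 2) + j"] by (intro by_edge[of "BW i j" "BW i (j + 1)"]) simp_all
  next
    case (4 i)
    let ?t = "(i - 1) * (k - 2) + (k - 2)"
    have "?t \<le> n * (k - 2)"
      using 4 by (intro page_index_le) simp_all
    then have "odd_skipping p ?t < 3 * p"
      using odd_skipping_bounds(2)[of p ?t] assms(2) by (simp add: card_book_vertices)
    then have "coprime p (odd_skipping p ?t)"
      by (rule coprime_prime_odd_less_triple[OF assms(1) odd_odd_skipping _ odd_skipping_neq])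
    then show ?thesis
      using 4 by (intro by_edge[of "BW i (k - 2)" BV]) (simp_all add: coprime_commute)
  qed
qed

theorem theorem3p4:
  fixes n k :: nat
  assumes "n \<ge> 1" and "k \<ge> 3"
  shows "odd_prime_graph (book_vertices n k) (book_edges n k)"
proof -
  let ?N = "card (book_vertices n k)"
  have "odd (2 * ?N - 1)" "3 \<le> 2 * ?N - 1"
    by (simp_all add: card_book_vertices)
  then obtain p where p: "prime p" "odd p" "p \<le> 2 * ?N - 1" "2 * ?N - 1 < 3 * p"
    using exists_odd_prime_le_less_triple by blast
  have "bij_betw (book_label p k) (book_vertices n k) {q. odd q \<and> q \<le> 2 * ?N - 1}"
    using p by (intro bij_betw_book_label) (auto simp: prime_gt_1_nat)
  moreover have "\<forall>a b. {a, b} \<in> book_edges n k \<longrightarrow> coprime (book_label p k a) (book_label p k b)"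
    using p coprime_book_label_edge by blast
  ultimately show ?thesis
    unfolding odd_prime_graph_def by blast
qed

end
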